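(* Let $k \geq 2$, $q \in (G,2)$ where $G = \frac{1+\sqrt5}{2}$, and $m \geq 0$ an integer. Let $$N_k^m(q) = \bigcap_{i=0}^m g_{q,k}^i(\mathcal{U}_q + 1) \cap g_{q,k}^m(\mathcal{U}_q).$$ If $x$ is a real number such that $f_0(x) = qx \in N_k^m(q)$, then $x \in \mathcal{U}_q^{(m+2)} \cap J_q$, and hence $q \in \mathcal{B}_{m+2}$.
   Context: For $q \in (1,2)$ let $I_q = [0, \frac{1}{q-1}]$. A sequence $(\epsilon_j)_{j\ge1} \in \{0,1\}^\mathbb{N}$ is a base $q$ expansion of $x$ if $x = \sum_{j\ge1} \epsilon_j q^{-j}$; $\Sigma_q(x)$ is the set of base $q$ expansions of $x$. $\mathcal{U}_q = \{x \in I_q : |\Sigma_q(x)| = 1\}$, and for $n \ge 2$, $\mathcal{U}_q^{(n)} = \{x \in I_q : |\Sigma_q(x)| = n\}$, $\mathcal{B}_n = \{q \in (1,2) : \mathcal{U}_q^{(n)} \neq \emptyset\}$. $\mathcal{U}_q + 1 = \{u+1 : u \in \mathcal{U}_q\}$. The maps are $f_0(x) = qx$ and $f_1(x) = qx - 1$, with inverses $f_0^{-1}(x) = x/q$, $f_1^{-1}(x) = (x+1)/q$. $g_{q,k} = f_1^{-(k-1)} \circ f_0^{-1}$, i.e. the affine map $g_{q,k}(x) = q^{-k}x + \sum_{j=1}^{k-1} q^{-j}$, and $g_{q,k}^i$ is its $i$-fold composition ($g^0$ is the identity). $J_q = [\frac1q, \frac{1}{q(q-1)}]$. *)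

theory Defs
  imports Complex_Main
begin

text \<open>A digit sequence is a map nat \<Rightarrow> bool; index j (from 0) stands for the
paper's digit epsilon_(j+1), with True = 1 and False = 0.\<close>

definition I_q :: "real \<Rightarrow> real set" where
  "I_q q = {0 .. 1 / (q - 1)}"

definition expansions :: "real \<Rightarrow> real \<Rightarrow> (nat \<Rightarrow> bool) set" where
  "expansions q x = {e. (\<lambda>j. (if e j then 1 else 0) / q ^ (Suc j)) sums x}"

definition U_q :: "real \<Rightarrow> real set" where
  "U_q q = {x \<in> I_q q. card (expansions q x) = 1}"

definition U_qn :: "real \<Rightarrow> nat \<Rightarrow> real set" where
  "U_qn q n = {x \<in> I_q q. card (expansions q x) = n}"

definition B_n :: "nat \<Rightarrow> real set" where
  "B_n n = {q. 1 < q \<and> q < 2 \<and> U_qn q n \<noteq> {}}"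

definition f0 :: "real \<Rightarrow> real \<Rightarrow> real" where "f0 q x = q * x"
definition f0_inv :: "real \<Rightarrow> real \<Rightarrow> real" where "f0_inv q x = x / q"
definition f1_inv :: "real \<Rightarrow> real \<Rightarrow> real" where "f1_inv q x = (x + 1) / q"

definition g :: "real \<Rightarrow> nat \<Rightarrow> real \<Rightarrow> real" where
  "g q k = (f1_inv q ^^ (k - 1)) \<circ> f0_inv q"

definition J_q :: "real \<Rightarrow> real set" where
  "J_q q = {1 / q .. 1 / (q * (q - 1))}"

definition N_km :: "real \<Rightarrow> nat \<Rightarrow> nat \<Rightarrow> real set" where
  "N_km q k m = (\<Inter>i\<in>{0..m}. (g q k ^^ i) ` ((\<lambda>u. u + 1) ` U_q q))
                 \<inter> (g q k ^^ m) ` U_q q"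

end

theory Submission
  imports Defs
begin

text \<open>Splitting an expansion of \<open>w\<close> at its first digit gives
\<open>|\<Sigma>(w)| = |\<Sigma>(qw)| + |\<Sigma>(qw - 1)|\<close>. For \<open>q\<close> above the golden ratio
a point \<open>(t + 1)/q\<close> with \<open>t \<ge> 1/q\<close> is too large to admit an expansion starting with
the digit 0, so \<open>f\<^sub>1\<^sup>-\<^sup>1\<close> preserves the number of expansions there. Hence \<open>g\<^sub>q\<^sub>,\<^sub>k\<close>
adds exactly one expansion to any \<open>z\<close> with finitely many expansions and \<open>z - 1 \<in> \<U>\<^sub>q\<close>,
the extra one coming from \<open>\<Sigma>(z - 1)\<close>. If \<open>qx = g\<^sup>m(u)\<close> with \<open>u \<in> \<U>\<^sub>q\<close>, injectivity of \<open>g\<close> turns the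
remaining conditions of \<open>N\<^sub>k\<^sup>m(q)\<close> into \<open>g\<^sup>j(u) \<in> \<U>\<^sub>q + 1\<close> for all \<open>j \<le> m\<close>,
so \<open>qx\<close> has \<open>m + 1\<close> expansions and \<open>x = qx/q\<close> has \<open>m + 2\<close>.\<close>

lemma mem_case_nat_image_iff:
  "e \<in> case_nat b ` A \<longleftrightarrow> e 0 = b \<and> (\<lambda>n. e (Suc n)) \<in> A"
proof
  assume "e 0 = b \<and> (\<lambda>n. e (Suc n)) \<in> A"
  moreover have "e = case_nat (e 0) (\<lambda>n. e (Suc n))"
    by (auto simp: fun_eq_iff split: nat.split)
  ultimately show "e \<in> case_nat b ` A" by (metis image_eqI)
qed auto

lemma inj_on_case_nat: "inj_on (case_nat b) A"
  by (rule inj_onI) (metis nat.case(2) fun_eq_iff)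

lemma expansions_Suc_iff:
  assumes "q > 1"
  shows "e \<in> expansions q w \<longleftrightarrow>
    (\<lambda>n. e (Suc n)) \<in> expansions q (q * w - of_bool (e 0))"
proof -
  define t where "t = (\<lambda>j. of_bool (e (Suc j)) / q ^ Suc j)"
  have "e \<in> expansions q w \<longleftrightarrow> (\<lambda>j. of_bool (e j) / q ^ Suc j) sums w"
    by (simp add: expansions_def of_bool_def)
  also have "\<dots> \<longleftrightarrow> (\<lambda>n. (1 / q) * t n) sums ((1 / q) * (q * w - of_bool (e 0)))"
    using assms sums_Suc_iff[of "\<lambda>j. of_bool (e j) / q ^ Suc j"]
    by (simp add: t_def field_simps)
  also have "\<dots> \<longleftrightarrow> t sums (q * w - of_bool (e 0))"
    using assms by (intro sums_mult_iff) simp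
  also have "\<dots> \<longleftrightarrow> (\<lambda>n. e (Suc n)) \<in> expansions q (q * w - of_bool (e 0))"
    by (simp add: expansions_def t_def of_bool_def)
  finally show ?thesis .
qed

lemma expansions_eq_Un:
  assumes "q > 1"
  shows "expansions q w =
    case_nat False ` expansions q (q * w) \<union> case_nat True ` expansions q (q * w - 1)"
proof (rule set_eqI)
  fix e
  show "e \<in> expansions q w \<longleftrightarrow>
    e \<in> case_nat False ` expansions q (q * w) \<union> case_nat True ` expansions q (q * w - 1)"
    using expansions_Suc_iff[OF assms, of e w]
    by (cases "e 0") (simp_all add: mem_case_nat_image_iff)
qed

lemma card_expansions_eq_add:
  assumes "q > 1" "finite (expansions q (q * w))" "finite (expansions q (q * w - 1))"
  shows "card (expansions q w) = card (expansions q (q * w)) + card (expansions q (q * w - 1))"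
proof -
  have "case_nat False ` A \<inter> case_nat True ` B = {}" for A B :: "(nat \<Rightarrow> bool) set"
    by (force dest: fun_cong[where x = 0])
  then show ?thesis
    using assms expansions_eq_Un[OF assms(1), of w]
    by (simp add: card_Un_disjoint card_image inj_on_case_nat)
qed

lemma mem_I_q_if_expansions_nonempty:
  assumes "q > 1" "expansions q w \<noteq> {}"
  shows "w \<in> I_q q"
proof -
  obtain e where w: "(\<lambda>j. of_bool (e j) / q ^ Suc j) sums w"
    using assms(2) by (auto simp: expansions_def of_bool_def)
  have "(\<lambda>j. 1 / q * (1 / q) ^ j) sums (1 / q * (1 / (1 - 1 / q)))"
    using assms(1) by (intro sums_mult geometric_sums) simp
  then have "(\<lambda>j. 1 / q ^ Suc j) sums (1 / (q - 1))"
    using assms(1) by (simp add: field_simps)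
  then have "w \<le> 1 / (q - 1)"
    using assms(1) by (intro sums_le[OF _ w]) auto
  moreover have "0 \<le> w"
    using assms(1) by (intro sums_le[OF _ sums_zero w]) simp
  ultimately show ?thesis by (simp add: I_q_def)
qed

lemma expansions_f1_inv:
  assumes "q > 1" "1 / (q - 1) < t + 1"
  shows "expansions q (f1_inv q t) = case_nat True ` expansions q t"
proof -
  have "q * f1_inv q t = t + 1" using assms(1) by (simp add: f1_inv_def)
  then have "expansions q (q * f1_inv q t) = {}"
    using assms mem_I_q_if_expansions_nonempty by (force simp: I_q_def)
  then show ?thesis
    using expansions_eq_Un[OF assms(1), of "f1_inv q t"] \<open>q * f1_inv q t = t + 1\<close> by simp
qed

lemma golden_ratio_lessD:
  assumes "(1 + sqrt 5) / 2 < q"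
  shows "1 < q" "1 / (q - 1) < 1 + 1 / q"
proof -
  have "sqrt 5 < 2 * q - 1" using assms by simp
  moreover have "1 \<le> sqrt 5" by simp
  ultimately show "1 < q" by linarith
  have "sqrt 5 ^ 2 < (2 * q - 1) ^ 2"
    using \<open>sqrt 5 < 2 * q - 1\<close> by (intro power_strict_mono) auto
  then have "q * q - q - 1 > 0" by (simp add: power2_eq_square algebra_simps)
  with \<open>1 < q\<close> show "1 / (q - 1) < 1 + 1 / q"
    by (simp add: field_simps)
qed

lemma f1_inv_funpow_ge:
  assumes "q > 1" "1 / q \<le> t"
  shows "1 / q \<le> (f1_inv q ^^ j) t"
proof (induction j)
  case (Suc j)
  then have "1 / q \<le> ((f1_inv q ^^ j) t + 1) / q"
    using assms(1) by (intro divide_right_mono) (auto intro: order_trans[rotated])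
  then show ?case by (metis f1_inv_def funpow.simps(2) o_apply)
qed (use assms in simp)

lemma card_expansions_f1_inv_funpow:
  assumes "(1 + sqrt 5) / 2 < q" "1 / q \<le> t"
  shows "card (expansions q ((f1_inv q ^^ j) t)) = card (expansions q t)"
proof (induction j)
  case (Suc j)
  note q = golden_ratio_lessD[OF assms(1)]
  have "1 / (q - 1) < (f1_inv q ^^ j) t + 1"
    using q f1_inv_funpow_ge[OF q(1) assms(2), of j] by linarith
  then show ?case
    using Suc q(1) by (simp add: expansions_f1_inv card_image inj_on_case_nat)
qed simp

lemma card_expansions_div:
  assumes "q > 1" "z - 1 \<in> U_q q" "finite (expansions q z)"
  shows "card (expansions q (z / q)) = card (expansions q z) + 1"
proof -
  have "card (expansions q (z - 1)) = 1" using assms(2) by (simp add: U_q_def)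
  then show ?thesis
    using assms card_expansions_eq_add[of q "z / q"] by (simp add: card_ge_0_finite)
qed

lemma card_expansions_g:
  assumes "(1 + sqrt 5) / 2 < q" "z - 1 \<in> U_q q" "finite (expansions q z)"
  shows "card (expansions q (g q k z)) = card (expansions q z) + 1"
proof -
  note q = golden_ratio_lessD[OF assms(1)]
  have "1 / q \<le> z / q"
    using q(1) assms(2) by (intro divide_right_mono) (auto simp: U_q_def I_q_def)
  then show ?thesis
    using assms card_expansions_f1_inv_funpow card_expansions_div[OF q(1)]
    by (simp add: g_def f0_inv_def)
qed

lemma inj_g:
  assumes "q \<noteq> 0"
  shows "inj (g q k)"
proof -
  have "inj (f1_inv q)" "inj (f0_inv q)"
    using assms by (auto intro!: injI simp: f1_inv_def f0_inv_def)
  then show ?thesis by (simp add: g_def inj_compose inj_fn)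
qed

lemma card_expansions_g_funpow:
  assumes "(1 + sqrt 5) / 2 < q" "u \<in> U_q q" "\<forall>j<n. (g q k ^^ j) u - 1 \<in> U_q q"
  shows "card (expansions q ((g q k ^^ n) u)) = n + 1"
  using assms(3)
proof (induction n)
  case 0
  then show ?case using assms(2) by (simp add: U_q_def)
next
  case (Suc n)
  then show ?case
    using assms(1) card_expansions_g[of q "(g q k ^^ n) u"] by (simp add: card_ge_0_finite)
qed

lemma N_km_imp_funpow_g_minus_one_mem_U_q:
  assumes "q \<noteq> 0" "(g q k ^^ m) u \<in> N_km q k m" "j \<le> m"
  shows "(g q k ^^ j) u - 1 \<in> U_q q"
proof -
  have "(g q k ^^ m) u \<in> (g q k ^^ (m - j)) ` ((\<lambda>u. u + 1) ` U_q q)"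
    using assms(2,3) by (simp add: N_km_def)
  moreover have "(g q k ^^ m) u = (g q k ^^ (m - j)) ((g q k ^^ j) u)"
    using assms(3) by (metis funpow_add le_add_diff_inverse2 comp_apply)
  ultimately have "(g q k ^^ j) u \<in> (\<lambda>u. u + 1) ` U_q q"
    using inj_g[OF assms(1)] by (simp add: inj_image_mem_iff inj_fn)
  then show ?thesis by auto
qed

lemma card_expansions_N_km:
  assumes "(1 + sqrt 5) / 2 < q" "y \<in> N_km q k m"
  shows "card (expansions q y) = m + 1"
proof -
  obtain u where "u \<in> U_q q" and y: "y = (g q k ^^ m) u"
    using assms(2) by (auto simp: N_km_def)
  moreover have "\<forall>j<m. (g q k ^^ j) u - 1 \<in> U_q q"
    using golden_ratio_lessD(1)[OF assms(1)] assms(2)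
    by (auto simp: y intro: N_km_imp_funpow_g_minus_one_mem_U_q)
  ultimately show ?thesis using card_expansions_g_funpow[OF assms(1)] by blast
qed

theorem proposition2p6:
  fixes q x :: real and k m :: nat
  assumes "k \<ge> 2"
    and "(1 + sqrt 5) / 2 < q" and "q < 2"
    and "f0 q x \<in> N_km q k m"
  shows "x \<in> U_qn q (m + 2) \<inter> J_q q \<and> q \<in> B_n (m + 2)"
proof -
  note q = golden_ratio_lessD(1)[OF assms(2)]
  define y where "y = q * x"
  have y: "y \<in> N_km q k m" using assms(4) by (simp add: y_def f0_def)
  then obtain u where "y = (g q k ^^ m) u" by (auto simp: N_km_def)
  then have y_U: "y - 1 \<in> U_q q"
    using N_km_imp_funpow_g_minus_one_mem_U_q[where j = m] y q by simp
  then have y_ge: "1 \<le> y" by (simp add: U_q_def I_q_def)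
  have card_y: "card (expansions q y) = m + 1"
    using card_expansions_N_km[OF assms(2) y] .
  then have y_le: "y \<le> 1 / (q - 1)"
    using mem_I_q_if_expansions_nonempty[OF q, of y] by (fastforce simp: I_q_def)
  have x: "x = y / q" using q by (simp add: y_def)
  have "card (expansions q x) = m + 2"
    using card_expansions_div[OF q y_U] card_y x by (simp add: card_ge_0_finite)
  then have "x \<in> U_qn q (m + 2)"
    using mem_I_q_if_expansions_nonempty[OF q, of x] by (fastforce simp: U_qn_def)
  moreover have "x \<in> J_q q"
    using divide_right_mono[OF y_ge, of q] divide_right_mono[OF y_le, of q] q
    by (simp add: J_q_def x mult.commute)
  ultimately show ?thesis using q assms(3) by (auto simp: B_n_def)
qed

end
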